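(* Let $\Sigma=(X,U,F)$ be a system, $Q\subset X$ a controlled invariant set, and $(\mathcal{A},G)$ a quasi-invariant-partition of $Q$. Then \[h_{inv}(\mathcal{A},G)=\overline{w}^*(\mathcal{A},G),\] where $\overline{w}^*(\mathcal{A},G)$ is the maximum mean weight.
   Context: A system is a triple $\Sigma=(X,U,F)$ where $X,U$ are nonempty sets and $F:X\times U\rightrightarrows X$ is a set-valued map with $F(x,u)\neq\emptyset$ for all $(x,u)$; for $A\subset X$, $F(A,u)=\bigcup_{x\in A}F(x,u)$. $Q\subset X$ is controlled invariant if for every $x\in Q$ there is $u\in U$ with $F(x,u)\subset Q$. An invariant cover of $Q$ is a pair $(\mathcal{A},G)$ where $\mathcal{A}$ is a finite cover of $Q$ (by subsets of $Q$) and $G:\mathcal{A}\to U$ satisfies $F(A,G(A))\subset Q$ for all $A\in\mathcal{A}$. For $\mathcal{S}\subset\mathcal{A}^n$, $\alpha=\alpha(0)\cdots\alpha(n-1)\in\mathcal{S}$ and integer $0\le t<n-1$, let $P(\alpha|_{[0,t]})=\{A\in\mathcal{A}:\exists\hat\alpha\in\mathcal{S},\ \hat\alpha|_{[0,t]}=\alpha|_{[0,t]},\ A=\hat\alpha(t+1)\}$, and $P(\alpha|_{[0,n-1]})=P(\alpha)=\{\hat\alpha(0):\hat\alpha\in\mathcal{S}\}$. $\mathcal{S}$ is $(n,Q)$-spanning in $(\mathcal{A},G)$ if (1) the elements of $P(\alpha)$ cover $Q$, and (2) for every $\alpha\in\mathcal{S}$ and $0\le t<n-1$, $F(\alpha(t),G(\alpha(t)))\subset\bigcup_{A'\in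 P(\alpha|_{[0,t]})}A'$. Let $N(\mathcal{S})=\max_{\alpha\in\mathcal{S}}\prod_{t=0}^{n-1}\sharp P(\alpha|_{[0,t]})$, $r_{inv}(n,Q,\mathcal{A},G)=\min\{N(\mathcal{S}):\mathcal{S}\ (n,Q)\text{-spanning in }(\mathcal{A},G)\}$, and $h_{inv}(\mathcal{A},G)=\lim_{n\to\infty}\frac1n\log r_{inv}(n,Q,\mathcal{A},G)$ ($\log$ base $2$). For $A\in\mathcal{A}$: $D(A)=\{A'\in\mathcal{A}:F(A,G(A))\cap A'\neq\emptyset\}$ and $w(A)=\log\sharp D(A)$. A sequence $(A_i)$ in $\mathcal{A}$ is admissible if $F(A_i,G(A_i))\cap A_{i+1}\neq\emptyset$ for all consecutive indices. A finite sequence $c=(A_i)_{i=0}^{k-1}$ is an irreducible sequence of period $k$ if the infinite sequence $ccc\cdots$ is admissible and $A_i\neq A_j$ for $i\neq j$; its mean weight is $\overline{w}(c)=\frac1k\sum_{i=0}^{k-1}w(A_i)$, and $\overline{w}^*(\mathcal{A},G)=\max_c\overline{w}(c)$ over all irreducible periodic sequences $c$. An invariant cover $(\mathcal{A},G)$ is a quasi-invariant-partition of $Q$ if $A\setminus\bigcup_{B\in\mathcal{A},B\neq A}B\neq\emptyset$ for all $A\in\mathcal{A}$, and $F(A,G(A))\cap\big(B\setminus\bigcup_{C\in D(A),C\neq B}C\big)\neq\emptyset$ for all $A\in\mathcal{A}$ and $B\in D(A)$. *)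

theory Defs
  imports Complex_Main
begin

definition Fset :: "('x \<Rightarrow> 'u \<Rightarrow> 'x set) \<Rightarrow> 'x set \<Rightarrow> 'u \<Rightarrow> 'x set" where
  "Fset F A u = (\<Union>x\<in>A. F x u)"

definition is_system :: "('x \<Rightarrow> 'u \<Rightarrow> 'x set) \<Rightarrow> bool" where
  "is_system F \<longleftrightarrow> (\<forall>x u. F x u \<noteq> {})"

definition controlled_invariant :: "('x \<Rightarrow> 'u \<Rightarrow> 'x set) \<Rightarrow> 'x set \<Rightarrow> bool" where
  "controlled_invariant F Q \<longleftrightarrow> (\<forall>x\<in>Q. \<exists>u. F x u \<subseteq> Q)"

definition invariant_cover ::
  "('x \<Rightarrow> 'u \<Rightarrow> 'x set) \<Rightarrow> 'x set \<Rightarrow> 'x set set \<Rightarrow> ('x set \<Rightarrow> 'u) \<Rightarrow> bool" where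
  "invariant_cover F Q \<A> G \<longleftrightarrow>
     finite \<A> \<and> (\<forall>A\<in>\<A>. A \<subseteq> Q) \<and> Q \<subseteq> \<Union>\<A> \<and>
     (\<forall>A\<in>\<A>. Fset F A (G A) \<subseteq> Q)"

definition Dset :: "('x \<Rightarrow> 'u \<Rightarrow> 'x set) \<Rightarrow> 'x set set \<Rightarrow> ('x set \<Rightarrow> 'u) \<Rightarrow> 'x set \<Rightarrow> 'x set set" where
  "Dset F \<A> G A = {A'\<in>\<A>. Fset F A (G A) \<inter> A' \<noteq> {}}"

definition weight :: "('x \<Rightarrow> 'u \<Rightarrow> 'x set) \<Rightarrow> 'x set set \<Rightarrow> ('x set \<Rightarrow> 'u) \<Rightarrow> 'x set \<Rightarrow> real" where
  "weight F \<A> G A = log 2 (real (card (Dset F \<A> G A)))"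

definition quasi_invariant_partition ::
  "('x \<Rightarrow> 'u \<Rightarrow> 'x set) \<Rightarrow> 'x set \<Rightarrow> 'x set set \<Rightarrow> ('x set \<Rightarrow> 'u) \<Rightarrow> bool" where
  "quasi_invariant_partition F Q \<A> G \<longleftrightarrow>
     invariant_cover F Q \<A> G \<and>
     (\<forall>A\<in>\<A>. A - \<Union>{B\<in>\<A>. B \<noteq> A} \<noteq> {}) \<and>
     (\<forall>A\<in>\<A>. \<forall>B\<in>Dset F \<A> G A.
        Fset F A (G A) \<inter> (B - \<Union>{C\<in>Dset F \<A> G A. C \<noteq> B}) \<noteq> {})"

text \<open>Sequences in \<A>^n are lists of length n. For a set S of such sequences and a
  prefix p = alpha|[0,t] (length t+1), Pset S n p is P(alpha|[0,t]); for the full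
  word (length n) it is the set of initial elements of members of S.\<close>

definition Pset :: "'x set list set \<Rightarrow> nat \<Rightarrow> 'x set list \<Rightarrow> 'x set set" where
  "Pset S n p =
     (if length p = n then {hd \<beta> | \<beta>. \<beta> \<in> S}
      else {\<beta> ! length p | \<beta>. \<beta> \<in> S \<and> take (length p) \<beta> = p})"

definition spanning ::
  "('x \<Rightarrow> 'u \<Rightarrow> 'x set) \<Rightarrow> 'x set \<Rightarrow> 'x set set \<Rightarrow> ('x set \<Rightarrow> 'u) \<Rightarrow> nat \<Rightarrow> 'x set list set \<Rightarrow> bool" where
  "spanning F Q \<A> G n S \<longleftrightarrow>
     S \<subseteq> {\<alpha>. length \<alpha> = n \<and> set \<alpha> \<subseteq> \<A>} \<and>
     Q \<subseteq> \<Union>(Pset S n (replicate n undefined)) \<and>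
     (\<forall>\<alpha>\<in>S. \<forall>t. t + 1 < n \<longrightarrow>
        Fset F (\<alpha> ! t) (G (\<alpha> ! t)) \<subseteq> \<Union>(Pset S n (take (t + 1) \<alpha>)))"

definition Nval :: "'x set list set \<Rightarrow> nat \<Rightarrow> nat" where
  "Nval S n = Max {(\<Prod>t<n. card (Pset S n (take (t + 1) \<alpha>))) | \<alpha>. \<alpha> \<in> S}"

definition r_inv ::
  "('x \<Rightarrow> 'u \<Rightarrow> 'x set) \<Rightarrow> 'x set \<Rightarrow> 'x set set \<Rightarrow> ('x set \<Rightarrow> 'u) \<Rightarrow> nat \<Rightarrow> nat" where
  "r_inv F Q \<A> G n = Min {Nval S n | S. spanning F Q \<A> G n S}"

definition irreducible_periodic ::
  "('x \<Rightarrow> 'u \<Rightarrow> 'x set) \<Rightarrow> 'x set set \<Rightarrow> ('x set \<Rightarrow> 'u) \<Rightarrow> 'x set list \<Rightarrow> bool" where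
  "irreducible_periodic F \<A> G c \<longleftrightarrow>
     c \<noteq> [] \<and> set c \<subseteq> \<A> \<and> distinct c \<and>
     (\<forall>i<length c. Fset F (c ! i) (G (c ! i)) \<inter> c ! ((i + 1) mod length c) \<noteq> {})"

definition mean_weight ::
  "('x \<Rightarrow> 'u \<Rightarrow> 'x set) \<Rightarrow> 'x set set \<Rightarrow> ('x set \<Rightarrow> 'u) \<Rightarrow> 'x set list \<Rightarrow> real" where
  "mean_weight F \<A> G c = (\<Sum>i<length c. weight F \<A> G (c ! i)) / real (length c)"

definition max_mean_weight ::
  "('x \<Rightarrow> 'u \<Rightarrow> 'x set) \<Rightarrow> 'x set set \<Rightarrow> ('x set \<Rightarrow> 'u) \<Rightarrow> real" where
  "max_mean_weight F \<A> G = Max {mean_weight F \<A> G c | c. irreducible_periodic F \<A> G c}"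

end

theory Submission
  imports Defs
begin

(* View the cover as a directed graph on its members, with an edge from A to B when B meets
   F(A, G A), so that the weight of A is the log of its out-degree |D(A)|.  The separation
   conditions of a quasi-invariant-partition force every (n,Q)-spanning set to contain every
   walk of length n, with D(alpha(t)) contained in P(alpha|[0,t]); conversely the walks of
   length n form a spanning set in which P(alpha|[0,t]) = D(alpha(t)) except at the last step.
   Hence log r_inv(n) is, up to a bounded error, the maximal weight of a walk of length n.
   Cutting a walk into simple cycles and a simple path bounds this maximum by n w* + O(1),
   and running around a cycle of maximal mean weight shows that it is at least n w* - O(1). *)

fun walk :: "'a set \<Rightarrow> ('a \<Rightarrow> 'a set) \<Rightarrow> 'a list \<Rightarrow> bool" where
  "walk V E [] = True"
| "walk V E [a] = (a \<in> V)"
| "walk V E (a # b # xs) = (a \<in> V \<and> b \<in> E a \<and> walk V E (b # xs))"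

lemma walk_Cons:
  "walk V E (a # xs) \<longleftrightarrow> a \<in> V \<and> walk V E xs \<and> (xs \<noteq> [] \<longrightarrow> hd xs \<in> E a)"
  by (cases xs) auto

lemma walk_append:
  "walk V E (xs @ ys) \<longleftrightarrow>
     walk V E xs \<and> walk V E ys \<and> (xs \<noteq> [] \<longrightarrow> ys \<noteq> [] \<longrightarrow> hd ys \<in> E (last xs))"
  by (induction xs) (auto simp: walk_Cons)

lemma walk_take: "walk V E xs \<Longrightarrow> walk V E (take k xs)"
  using walk_append[of V E "take k xs" "drop k xs"] by simp

lemma walk_iff_nth:
  "walk V E xs \<longleftrightarrow> set xs \<subseteq> V \<and> (\<forall>i. Suc i < length xs \<longrightarrow> xs ! Suc i \<in> E (xs ! i))"
proof (induction xs rule: walk.induct)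
  case (3 a b xs)
  then show ?case by (auto simp: nth_Cons split: nat.splits)
qed auto

definition closed_walk :: "'a set \<Rightarrow> ('a \<Rightarrow> 'a set) \<Rightarrow> 'a list \<Rightarrow> bool" where
  "closed_walk V E c \<longleftrightarrow> c \<noteq> [] \<and> walk V E (c @ [hd c])"

definition max_cycle_mean :: "'a set \<Rightarrow> ('a \<Rightarrow> 'a set) \<Rightarrow> ('a \<Rightarrow> real) \<Rightarrow> real" where
  "max_cycle_mean V E w =
     Max {sum_list (map w c) / real (length c) | c. closed_walk V E c \<and> distinct c}"

lemma closed_walk_iff_nth:
  "closed_walk V E c \<longleftrightarrow>
     c \<noteq> [] \<and> set c \<subseteq> V \<and> (\<forall>i<length c. c ! (Suc i mod length c) \<in> E (c ! i))"
proof (cases "c = []")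
  case False
  have "(c @ [hd c]) ! Suc i = c ! (Suc i mod length c)" if "i < length c" for i
    using False that by (cases "Suc i = length c") (auto simp: nth_append hd_conv_nth)
  with False show ?thesis
    by (auto simp: closed_walk_def walk_iff_nth nth_append)
qed (simp add: closed_walk_def)

lemma closed_walk_imp_set_subset: "closed_walk V E c \<Longrightarrow> set c \<subseteq> V"
  by (simp add: closed_walk_iff_nth)

lemma closed_walk_split:
  assumes "closed_walk V E (xs @ [y] @ ys @ [y] @ zs)"
  shows "closed_walk V E (y # ys)" "closed_walk V E (xs @ y # zs)"
  using assms by (auto simp: closed_walk_def walk_append walk_Cons hd_append split: if_splits)

lemma walk_split:
  assumes "walk V E (xs @ [y] @ ys @ [y] @ zs)"
  shows "closed_walk V E (y # ys)" "walk V E (xs @ y # zs)"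
  using assms by (auto simp: closed_walk_def walk_append walk_Cons hd_append split: if_splits)

lemma closed_walk_nth_mod:
  assumes "closed_walk V E c"
  shows "c ! (Suc i mod length c) \<in> E (c ! (i mod length c))"
proof -
  have "c \<noteq> []" "\<forall>j<length c. c ! (Suc j mod length c) \<in> E (c ! j)"
    using assms by (simp_all add: closed_walk_iff_nth)
  then have "c ! (Suc (i mod length c) mod length c) \<in> E (c ! (i mod length c))"
    by simp
  then show ?thesis
    by (simp only: mod_Suc_eq)
qed

lemma walk_extend:
  assumes "\<And>a. a \<in> V \<Longrightarrow> E a \<inter> V \<noteq> {}" "walk V E p" "p \<noteq> []"
  shows "\<exists>q. length q = k \<and> walk V E (p @ q)"
proof (induction k)
  case (Suc k)
  then obtain q where q: "length q = k" "walk V E (p @ q)"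
    by blast
  then have "last (p @ q) \<in> V"
    using assms(3) last_in_set[of "p @ q"] by (auto simp: walk_iff_nth)
  then obtain b where "b \<in> V" "b \<in> E (last (p @ q))"
    using assms(1) by blast
  then have "walk V E ((p @ q) @ [b])"
    using q assms(3) by (subst walk_append) simp
  then show ?case
    using q by (intro exI[of _ "q @ [b]"]) simp
qed (use assms(2) in simp)

lemma finite_cycle_means:
  assumes "finite V"
  shows "finite {sum_list (map w c) / real (length c) | c. closed_walk V E c \<and> distinct c}"
proof -
  have "length c \<le> card V" if "closed_walk V E c" "distinct c" for c
    using that closed_walk_imp_set_subset card_mono[OF assms] distinct_card by metis
  then have "{c. closed_walk V E c \<and> distinct c} \<subseteq> {xs. set xs \<subseteq> V \<and> length xs \<le> card V}"
    using closed_walk_imp_set_subset by blast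
  then have "finite {c. closed_walk V E c \<and> distinct c}"
    using finite_lists_length_le[OF assms] finite_subset by blast
  then show ?thesis
    by (rule finite_image_set)
qed

lemma sum_closed_walk_le:
  assumes "finite V" "closed_walk V E c"
  shows "sum_list (map w c) \<le> real (length c) * max_cycle_mean V E w"
  using assms(2)
proof (induction "length c" arbitrary: c rule: less_induct)
  case less
  show ?case
  proof (cases "distinct c")
    case True
    have "sum_list (map w c) / real (length c) \<le> max_cycle_mean V E w"
      unfolding max_cycle_mean_def using True less.prems
      by (intro Max_ge[OF finite_cycle_means[OF assms(1)]]) auto
    moreover have "length c > 0"
      using less.prems by (auto simp: closed_walk_def)
    ultimately show ?thesis
      by (simp add: divide_le_eq mult.commute)
  next
    case False
    then obtain xs ys zs y where c: "c = xs @ [y] @ ys @ [y] @ zs"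
      using not_distinct_decomp by blast
    from less.prems have "closed_walk V E (xs @ [y] @ ys @ [y] @ zs)"
      by (simp only: c)
    note cycle = closed_walk_split(1)[OF this] and rest = closed_walk_split(2)[OF this]
    have "sum_list (map w (y # ys)) \<le> real (length (y # ys)) * max_cycle_mean V E w"
      using less.hyps[OF _ cycle] by (simp add: c)
    moreover have
      "sum_list (map w (xs @ y # zs)) \<le> real (length (xs @ y # zs)) * max_cycle_mean V E w"
      using less.hyps[OF _ rest] by (simp add: c)
    ultimately show ?thesis
      by (simp add: c algebra_simps)
  qed
qed

lemma sum_walk_le:
  assumes "finite V" "walk V E xs" "\<And>a. a \<in> V \<Longrightarrow> w a \<le> W" "0 \<le> W"
    and "0 \<le> max_cycle_mean V E w"
  shows "sum_list (map w xs) \<le> real (length xs) * max_cycle_mean V E w + real (card V) * W"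
  using assms(2)
proof (induction "length xs" arbitrary: xs rule: less_induct)
  case less
  show ?case
  proof (cases "distinct xs")
    case True
    have "set xs \<subseteq> V"
      using less.prems by (simp add: walk_iff_nth)
    then have "sum_list (map w xs) \<le> sum_list (map (\<lambda>_. W) xs)"
      using assms(3) by (intro sum_list_mono) auto
    also have "\<dots> = real (length xs) * W"
      by (simp add: sum_list_triv)
    also have "\<dots> \<le> real (card V) * W"
      using True \<open>set xs \<subseteq> V\<close> distinct_card card_mono[OF assms(1)] assms(4)
      by (metis mult_right_mono of_nat_le_iff)
    finally show ?thesis
      using assms(5) by (simp add: add_increasing)
  next
    case False
    then obtain xs' ys zs y where c: "xs = xs' @ [y] @ ys @ [y] @ zs"
      using not_distinct_decomp by blast
    from less.prems have "walk V E (xs' @ [y] @ ys @ [y] @ zs)"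
      by (simp only: c)
    note cycle = walk_split(1)[OF this] and rest = walk_split(2)[OF this]
    have "sum_list (map w (y # ys)) \<le> real (length (y # ys)) * max_cycle_mean V E w"
      by (rule sum_closed_walk_le[OF assms(1) cycle])
    moreover have "sum_list (map w (xs' @ y # zs))
        \<le> real (length (xs' @ y # zs)) * max_cycle_mean V E w + real (card V) * W"
      using less.hyps[OF _ rest] by (simp add: c)
    ultimately show ?thesis
      by (simp add: c algebra_simps)
  qed
qed

lemma closed_walk_imp_cycle:
  assumes "closed_walk V E c"
  shows "\<exists>d. closed_walk V E d \<and> distinct d"
  using assms
proof (induction "length c" arbitrary: c rule: less_induct)
  case less
  show ?case
  proof (cases "distinct c")
    case False
    then obtain xs ys zs y where c: "c = xs @ [y] @ ys @ [y] @ zs"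
      using not_distinct_decomp by blast
    from less.prems have "closed_walk V E (xs @ [y] @ ys @ [y] @ zs)"
      by (simp only: c)
    with less.hyps[of "y # ys"] show ?thesis
      by (simp add: c closed_walk_split)
  qed (use less.prems in blast)
qed

lemma cycle_exists:
  assumes "finite V" "V \<noteq> {}" "\<And>a. a \<in> V \<Longrightarrow> E a \<inter> V \<noteq> {}"
  shows "\<exists>c. closed_walk V E c \<and> distinct c"
proof -
  obtain a where "a \<in> V"
    using assms(2) by blast
  then obtain q where q: "length q = card V" "walk V E (a # q)"
    using walk_extend[of V E "[a]" "card V", OF assms(3)] by auto
  then have "card (set (a # q)) \<le> card V"
    using card_mono[OF assms(1)] by (simp add: walk_iff_nth del: list.set)
  then have "\<not> distinct (a # q)"
    using q(1) distinct_card by fastforce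
  then obtain xs ys zs y where "a # q = xs @ [y] @ ys @ [y] @ zs"
    using not_distinct_decomp by blast
  with q(2) have "closed_walk V E (y # ys)"
    using walk_split by metis
  then show ?thesis
    by (rule closed_walk_imp_cycle)
qed

lemma max_cycle_mean_attained:
  assumes "finite V" "V \<noteq> {}" "\<And>a. a \<in> V \<Longrightarrow> E a \<inter> V \<noteq> {}"
  shows "\<exists>c. closed_walk V E c \<and> distinct c \<and>
    sum_list (map w c) = real (length c) * max_cycle_mean V E w"
proof -
  let ?means = "{sum_list (map w c) / real (length c) | c. closed_walk V E c \<and> distinct c}"
  have "?means \<noteq> {}"
    using cycle_exists[of V E, OF assms] by blast
  then have "max_cycle_mean V E w \<in> ?means"
    unfolding max_cycle_mean_def by (rule Max_in[OF finite_cycle_means[OF assms(1)]])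
  then obtain c where c: "closed_walk V E c" "distinct c"
    and mean: "max_cycle_mean V E w = sum_list (map w c) / real (length c)"
    by blast
  have "c \<noteq> []"
    using c(1) by (simp add: closed_walk_def)
  with c mean show ?thesis
    by (intro exI[of _ c]) simp
qed

lemma max_cycle_mean_nonneg:
  assumes "finite V" "V \<noteq> {}" "\<And>a. a \<in> V \<Longrightarrow> E a \<inter> V \<noteq> {}"
    and "\<And>a. a \<in> V \<Longrightarrow> 0 \<le> w a"
  shows "0 \<le> max_cycle_mean V E w"
proof -
  obtain c where c: "closed_walk V E c"
    and sum_c: "sum_list (map w c) = real (length c) * max_cycle_mean V E w"
    using max_cycle_mean_attained[of V E w, OF assms(1-3)] by blast
  have "0 \<le> sum_list (map w c)"
    using closed_walk_imp_set_subset[OF c] assms(4) by (intro sum_list_nonneg) auto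
  with sum_c c show ?thesis
    by (simp add: closed_walk_def zero_le_mult_iff)
qed

lemma walk_periodic:
  assumes "closed_walk V E c"
  shows "walk V E (map (\<lambda>t. c ! (t mod length c)) [0..<n])"
proof -
  have "c \<noteq> []"
    using assms by (simp add: closed_walk_def)
  then show ?thesis
    using closed_walk_imp_set_subset[OF assms] closed_walk_nth_mod[OF assms]
    by (auto simp: walk_iff_nth)
qed

lemma sum_lessThan_mult_mod:
  fixes f :: "nat \<Rightarrow> 'a::comm_semiring_1"
  shows "(\<Sum>t<q * k. f (t mod k)) = of_nat q * (\<Sum>t<k. f t)"
proof (induction q)
  case (Suc q)
  have "(\<Sum>t<Suc q * k. f (t mod k))
      = (\<Sum>t<q * k. f (t mod k)) + (\<Sum>t\<in>{q * k..<k + q * k}. f (t mod k))"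
    by (simp add: lessThan_atLeast0 sum.atLeastLessThan_concat add.commute)
  also have "(\<Sum>t\<in>{q * k..<k + q * k}. f (t mod k)) = (\<Sum>t<k. f t)"
    using sum.shift_bounds_nat_ivl[of "\<lambda>t. f (t mod k)" 0 "q * k" k]
    by (simp add: lessThan_atLeast0)
  finally show ?case
    using Suc by (simp add: algebra_simps)
qed simp

lemma sum_lessThan_mod_ge:
  fixes f :: "nat \<Rightarrow> real"
  assumes "0 < k" "\<And>i. i < k \<Longrightarrow> 0 \<le> f i"
  shows "(real n / real k - 1) * (\<Sum>i<k. f i) \<le> (\<Sum>t<n. f (t mod k))"
proof -
  have "real n = real (n div k) * real k + real (n mod k)"
    by (metis of_nat_add of_nat_mult div_mult_mod_eq)
  moreover have "real (n mod k) \<le> real k"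
    using assms(1) by simp
  ultimately have "real n / real k - 1 \<le> real (n div k)"
    using assms(1) by (simp add: field_simps)
  then have "(real n / real k - 1) * (\<Sum>i<k. f i) \<le> real (n div k) * (\<Sum>i<k. f i)"
    using assms(2) by (intro mult_right_mono sum_nonneg) auto
  also have "\<dots> = (\<Sum>t<n div k * k. f (t mod k))"
    by (rule sum_lessThan_mult_mod[symmetric])
  also have "\<dots> \<le> (\<Sum>t<n. f (t mod k))"
    using assms by (intro sum_mono2) (auto simp: div_times_less_eq_dividend)
  finally show ?thesis .
qed

lemma long_walks_weight_ge:
  assumes "finite V" "V \<noteq> {}" "\<And>a. a \<in> V \<Longrightarrow> E a \<inter> V \<noteq> {}"
    and "\<And>a. a \<in> V \<Longrightarrow> 0 \<le> w a"
  obtains a where "\<And>n. \<exists>xs. walk V E xs \<and> length xs = n \<and>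
    real n * max_cycle_mean V E w - a \<le> sum_list (map w xs)"
proof -
  let ?M = "max_cycle_mean V E w"
  obtain c where c: "closed_walk V E c"
    and sum_c: "sum_list (map w c) = real (length c) * ?M"
    using max_cycle_mean_attained[of V E w, OF assms(1-3)] by blast
  let ?k = "length c"
  have "?k > 0"
    using c by (simp add: closed_walk_def)
  have w_nonneg: "0 \<le> w (c ! i)" if "i < ?k" for i
    using closed_walk_imp_set_subset[OF c] assms(4) that by (meson nth_mem subsetD)
  have "\<exists>xs. walk V E xs \<and> length xs = n \<and> real n * ?M - real ?k * ?M \<le> sum_list (map w xs)"
    for n
  proof -
    let ?xs = "map (\<lambda>t. c ! (t mod ?k)) [0..<n]"
    have "real n * ?M - real ?k * ?M = (real n / real ?k - 1) * (\<Sum>i<?k. w (c ! i))"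
      using \<open>?k > 0\<close> sum_c by (simp add: sum_list_sum_nth lessThan_atLeast0 field_simps)
    also have "\<dots> \<le> (\<Sum>t<n. w (c ! (t mod ?k)))"
      using sum_lessThan_mod_ge[OF \<open>?k > 0\<close>, of "\<lambda>i. w (c ! i)"] w_nonneg by blast
    also have "\<dots> = sum_list (map w ?xs)"
      by (simp add: sum_list_sum_nth lessThan_atLeast0)
    finally show ?thesis
      using walk_periodic[OF c] by (intro exI[of _ ?xs]) simp
  qed
  then show thesis
    by (rule that)
qed

lemma LIMSEQ_divide_of_linear_bounds:
  fixes f :: "nat \<Rightarrow> real"
  assumes "\<And>n. n > 0 \<Longrightarrow> real n * M - a \<le> f n" "\<And>n. n > 0 \<Longrightarrow> f n \<le> real n * M + b"
  shows "(\<lambda>n. f n / real n) \<longlonglongrightarrow> M"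
proof (rule tendsto_sandwich)
  show "\<forall>\<^sub>F n in sequentially. M - a / real n \<le> f n / real n"
  proof (rule eventually_sequentiallyI[of 1])
    fix n :: nat
    assume "1 \<le> n"
    then have "(real n * M - a) / real n \<le> f n / real n"
      using assms(1) by (intro divide_right_mono) auto
    with \<open>1 \<le> n\<close> show "M - a / real n \<le> f n / real n"
      by (simp add: diff_divide_distrib)
  qed
  show "\<forall>\<^sub>F n in sequentially. f n / real n \<le> M + b / real n"
  proof (rule eventually_sequentiallyI[of 1])
    fix n :: nat
    assume "1 \<le> n"
    then have "f n / real n \<le> (real n * M + b) / real n"
      using assms(2) by (intro divide_right_mono) auto
    with \<open>1 \<le> n\<close> show "f n / real n \<le> M + b / real n"
      by (simp add: add_divide_distrib)
  qed
  show "(\<lambda>n. M - a / real n) \<longlonglongrightarrow> M" "(\<lambda>n. M + b / real n) \<longlonglongrightarrow> M"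
    by (auto intro!: tendsto_eq_intros)
qed

lemma Pset_subset:
  assumes "S \<subseteq> {\<alpha>. length \<alpha> = n \<and> set \<alpha> \<subseteq> V}" "0 < n" "length p \<le> n"
  shows "Pset S n p \<subseteq> V"
proof
  fix B
  assume "B \<in> Pset S n p"
  then obtain \<beta> where "\<beta> \<in> S" and B: "B = (if length p = n then hd \<beta> else \<beta> ! length p)"
    by (auto simp: Pset_def split: if_splits)
  then have "length \<beta> = n" "set \<beta> \<subseteq> V"
    using assms(1) by auto
  with assms(2,3) B show "B \<in> V"
    using hd_in_set[of \<beta>] nth_mem[of "length p" \<beta>] by (auto split: if_splits)
qed

lemma Pset_full: "length p = n \<Longrightarrow> Pset S n p = {hd \<beta> | \<beta>. \<beta> \<in> S}"
  by (simp add: Pset_def)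

lemma Dset_subset: "Dset F \<A> G A \<subseteq> \<A>"
  by (auto simp: Dset_def)

locale quasi_invariant_partition_system =
  fixes F :: "'x \<Rightarrow> 'u \<Rightarrow> 'x set" and Q :: "'x set"
    and \<A> :: "'x set set" and G :: "'x set \<Rightarrow> 'u"
  assumes system: "is_system F"
    and Q_nonempty: "Q \<noteq> {}"
    and partition: "quasi_invariant_partition F Q \<A> G"
begin

abbreviation D :: "'x set \<Rightarrow> 'x set set" where
  "D \<equiv> Dset F \<A> G"

abbreviation w :: "'x set \<Rightarrow> real" where
  "w \<equiv> weight F \<A> G"

lemma finite_cover: "finite \<A>"
  and cover_subset: "A \<in> \<A> \<Longrightarrow> A \<subseteq> Q"
  and subset_Union_cover: "Q \<subseteq> \<Union>\<A>"
  and image_subset: "A \<in> \<A> \<Longrightarrow> Fset F A (G A) \<subseteq> Q"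
  using partition by (auto simp: quasi_invariant_partition_def invariant_cover_def)

lemma private_point_nonempty:
  assumes "A \<in> \<A>"
  shows "A - \<Union>{B\<in>\<A>. B \<noteq> A} \<noteq> {}"
proof -
  have "\<forall>A\<in>\<A>. A - \<Union>{B\<in>\<A>. B \<noteq> A} \<noteq> {}"
    using partition unfolding quasi_invariant_partition_def by (elim conjE)
  then show ?thesis
    using assms by (rule bspec)
qed

lemma private_successor_point_nonempty:
  assumes "A \<in> \<A>" "B \<in> D A"
  shows "Fset F A (G A) \<inter> (B - \<Union>{C\<in>D A. C \<noteq> B}) \<noteq> {}"
proof -
  have "\<forall>A\<in>\<A>. \<forall>B\<in>D A. Fset F A (G A) \<inter> (B - \<Union>{C\<in>D A. C \<noteq> B}) \<noteq> {}"
    using partition unfolding quasi_invariant_partition_def by (elim conjE)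
  then show ?thesis
    using assms by blast
qed

lemma cover_nonempty: "\<A> \<noteq> {}"
  using Q_nonempty subset_Union_cover by blast

lemma image_subset_Union_Dset: "A \<in> \<A> \<Longrightarrow> Fset F A (G A) \<subseteq> \<Union>(D A)"
  using image_subset subset_Union_cover unfolding Dset_def by blast

lemma Dset_nonempty:
  assumes "A \<in> \<A>"
  shows "D A \<noteq> {}"
proof -
  obtain x where "x \<in> A"
    using private_point_nonempty[OF assms] by blast
  moreover obtain y where "y \<in> F x (G A)"
    using system by (auto simp: is_system_def)
  ultimately have "y \<in> Fset F A (G A)"
    by (auto simp: Fset_def)
  then show ?thesis
    using image_subset_Union_Dset[OF assms] by blast
qed

lemma successor_exists: "A \<in> \<A> \<Longrightarrow> D A \<inter> \<A> \<noteq> {}"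
  using Dset_nonempty Dset_subset by blast

lemma card_Dset_pos: "A \<in> \<A> \<Longrightarrow> 0 < card (D A)"
  using Dset_nonempty Dset_subset finite_cover by (meson card_gt_0_iff finite_subset)

lemma weight_nonneg: "A \<in> \<A> \<Longrightarrow> 0 \<le> w A"
  using card_Dset_pos[of A] by (simp add: weight_def Suc_le_eq)

lemma weight_le: "A \<in> \<A> \<Longrightarrow> w A \<le> log 2 (real (card \<A>))"
  using card_Dset_pos[of A] card_mono[OF finite_cover Dset_subset]
  unfolding weight_def by (intro log_mono) auto

lemma Dset_subset_of_covers:
  assumes "A \<in> \<A>" "P \<subseteq> \<A>" "Fset F A (G A) \<subseteq> \<Union>P"
  shows "D A \<subseteq> P"
proof
  fix B
  assume B: "B \<in> D A"
  obtain x where x: "x \<in> Fset F A (G A)" "x \<in> B" "x \<notin> \<Union>{C\<in>D A. C \<noteq> B}"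
    using private_successor_point_nonempty[OF assms(1) B] by blast
  then obtain B' where "B' \<in> P" "x \<in> B'"
    using assms(3) by blast
  with x assms(2) have "B' = B"
    by (auto simp: Dset_def)
  with \<open>B' \<in> P\<close> show "B \<in> P"
    by simp
qed

lemma cover_subset_of_covers:
  assumes "P \<subseteq> \<A>" "Q \<subseteq> \<Union>P"
  shows "\<A> \<subseteq> P"
proof
  fix A
  assume A: "A \<in> \<A>"
  obtain x where x: "x \<in> A" "x \<notin> \<Union>{B\<in>\<A>. B \<noteq> A}"
    using private_point_nonempty[OF A] by blast
  then obtain B' where "B' \<in> P" "x \<in> B'"
    using cover_subset[OF A] assms(2) by blast
  with x assms(1) show "A \<in> P"
    by blast
qed

lemma irreducible_periodic_iff:
  "irreducible_periodic F \<A> G c \<longleftrightarrow> closed_walk \<A> D c \<and> distinct c"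
proof -
  have "c ! (Suc i mod length c) \<in> \<A>" if "set c \<subseteq> \<A>" "i < length c" for i
  proof -
    have "Suc i mod length c < length c"
      using that(2) by (metis le_less_trans mod_less_divisor zero_le)
    with that(1) show ?thesis
      by (meson nth_mem subsetD)
  qed
  then show ?thesis
    by (auto simp: irreducible_periodic_def closed_walk_iff_nth Dset_def)
qed

lemma max_mean_weight_eq: "max_mean_weight F \<A> G = max_cycle_mean \<A> D w"
proof -
  have "{mean_weight F \<A> G c | c. irreducible_periodic F \<A> G c}
      = {sum_list (map w c) / real (length c) | c. closed_walk \<A> D c \<and> distinct c}"
    by (simp add: irreducible_periodic_iff mean_weight_def sum_list_sum_nth lessThan_atLeast0)
  then show ?thesis
    by (simp add: max_mean_weight_def max_cycle_mean_def)
qed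

definition walks :: "nat \<Rightarrow> 'x set list set" where
  "walks n = {\<alpha>. length \<alpha> = n \<and> walk \<A> D \<alpha>}"

lemma spanning_imp_subset: "spanning F Q \<A> G n S \<Longrightarrow> S \<subseteq> {\<alpha>. length \<alpha> = n \<and> set \<alpha> \<subseteq> \<A>}"
  by (simp add: spanning_def)

lemma finite_words: "finite {\<alpha>. length \<alpha> = n \<and> set \<alpha> \<subseteq> \<A>}"
  using finite_lists_length_eq[OF finite_cover] by (simp add: conj_commute)

lemma spanning_Dset_subset_Pset:
  assumes S: "spanning F Q \<A> G n S" and "\<alpha> \<in> S" "t < n"
  shows "D (\<alpha> ! t) \<subseteq> Pset S n (take (t + 1) \<alpha>)"
proof -
  have "length \<alpha> = n" "set \<alpha> \<subseteq> \<A>"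
    using spanning_imp_subset[OF S] \<open>\<alpha> \<in> S\<close> by auto
  then have "\<alpha> ! t \<in> \<A>"
    using \<open>t < n\<close> by auto
  have P_subset: "Pset S n (take (t + 1) \<alpha>) \<subseteq> \<A>"
    using Pset_subset[OF spanning_imp_subset[OF S]] \<open>length \<alpha> = n\<close> \<open>t < n\<close> by simp
  show ?thesis
  proof (cases "t + 1 < n")
    case True
    then have "Fset F (\<alpha> ! t) (G (\<alpha> ! t)) \<subseteq> \<Union>(Pset S n (take (t + 1) \<alpha>))"
      using S \<open>\<alpha> \<in> S\<close> by (simp add: spanning_def)
    then show ?thesis
      by (rule Dset_subset_of_covers[OF \<open>\<alpha> ! t \<in> \<A>\<close> P_subset])
  next
    case False
    \<comment> \<open>t = n - 1, so P(\<alpha>|[0,t]) is P(\<alpha>), the set of first letters, which covers Q\<close>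
    with \<open>length \<alpha> = n\<close> \<open>t < n\<close> have "Q \<subseteq> \<Union>(Pset S n (take (t + 1) \<alpha>))"
      using S by (simp add: spanning_def Pset_full)
    then show ?thesis
      using cover_subset_of_covers[OF P_subset] Dset_subset by blast
  qed
qed

lemma spanning_contains_walk_prefixes:
  assumes S: "spanning F Q \<A> G n S"
  shows "walk \<A> D p \<Longrightarrow> p \<noteq> [] \<Longrightarrow> length p \<le> n \<Longrightarrow> \<exists>\<beta>\<in>S. take (length p) \<beta> = p"
proof (induction p rule: rev_induct)
  case (snoc b p)
  have S_words: "length \<beta> = n" if "\<beta> \<in> S" for \<beta>
    using spanning_imp_subset[OF S] that by auto
  show ?case
  proof (cases "p = []")
    case True
    have "0 < n"
      using snoc.prems by simp
    then have "Pset S n (replicate n undefined) \<subseteq> \<A>"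
      using Pset_subset[OF spanning_imp_subset[OF S]] by simp
    moreover have "Q \<subseteq> \<Union>(Pset S n (replicate n undefined))"
      using S by (simp add: spanning_def)
    ultimately have "\<A> \<subseteq> Pset S n (replicate n undefined)"
      by (rule cover_subset_of_covers)
    then obtain \<beta> where "\<beta> \<in> S" "b = hd \<beta>"
      using snoc.prems True by (auto simp: Pset_def)
    moreover have "\<beta> \<noteq> []"
      using S_words[OF \<open>\<beta> \<in> S\<close>] \<open>0 < n\<close> by auto
    ultimately show ?thesis
      using True by (cases \<beta>) (auto intro!: bexI[of _ \<beta>])
  next
    case False
    with snoc.prems have p: "walk \<A> D p" "b \<in> D (last p)" "length p < n"
      by (auto simp: walk_append)
    obtain \<beta> where "\<beta> \<in> S" and \<beta>: "take (length p) \<beta> = p"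
      using snoc.IH[OF p(1) False] p(3) by auto
    define t where "t = length p - 1"
    have t: "t < n" "t + 1 = length p"
      using False p(3) by (auto simp: t_def)
    have "last p = p ! t"
      using False by (simp add: last_conv_nth t_def)
    also have "\<dots> = \<beta> ! t"
      using nth_take[of t "length p" \<beta>] \<beta> t(2) by simp
    finally have "b \<in> Pset S n p"
      using spanning_Dset_subset_Pset[OF S \<open>\<beta> \<in> S\<close> t(1)] p(2) \<beta> t(2) by auto
    then obtain \<beta>' where "\<beta>' \<in> S" "take (length p) \<beta>' = p" "b = \<beta>' ! length p"
      using p(3) by (auto simp: Pset_def)
    with S_words p(3) show ?thesis
      by (auto simp: take_Suc_conv_app_nth)
  qed
qed simp

lemma walk_mem_spanning:
  assumes S: "spanning F Q \<A> G n S" and "walk \<A> D \<alpha>" "length \<alpha> = n" "0 < n"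
  shows "\<alpha> \<in> S"
proof -
  obtain \<beta> where "\<beta> \<in> S" "take n \<beta> = \<alpha>"
    using spanning_contains_walk_prefixes[OF S assms(2)] assms(3,4) by auto
  moreover have "length \<beta> = n"
    using spanning_imp_subset[OF S] \<open>\<beta> \<in> S\<close> by auto
  ultimately show ?thesis
    by simp
qed

lemma prod_card_Dset_le_Nval:
  assumes S: "spanning F Q \<A> G n S" and "walk \<A> D \<alpha>" "length \<alpha> = n" "0 < n"
  shows "(\<Prod>t<n. card (D (\<alpha> ! t))) \<le> Nval S n"
proof -
  have "\<alpha> \<in> S"
    by (rule walk_mem_spanning[OF assms])
  have "(\<Prod>t<n. card (D (\<alpha> ! t))) \<le> (\<Prod>t<n. card (Pset S n (take (t + 1) \<alpha>)))"
  proof (intro prod_mono conjI)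
    fix t
    assume "t \<in> {..<n}"
    then have "Pset S n (take (t + 1) \<alpha>) \<subseteq> \<A>"
      using Pset_subset[OF spanning_imp_subset[OF S] \<open>0 < n\<close>] \<open>length \<alpha> = n\<close> by simp
    then show "card (D (\<alpha> ! t)) \<le> card (Pset S n (take (t + 1) \<alpha>))"
      using spanning_Dset_subset_Pset[OF S \<open>\<alpha> \<in> S\<close>] \<open>t \<in> {..<n}\<close> finite_cover
      by (meson card_mono finite_subset lessThan_iff)
  qed simp
  also have "\<dots> \<le> Nval S n"
  proof -
    have "finite S"
      using spanning_imp_subset[OF S] finite_words finite_subset by blast
    then show ?thesis
      unfolding Nval_def using \<open>\<alpha> \<in> S\<close> by (intro Max_ge) auto
  qed
  finally show ?thesis .
qed

lemma finite_spanning_Nvals: "finite {Nval S n | S. spanning F Q \<A> G n S}"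
proof -
  have "{Nval S n | S. spanning F Q \<A> G n S}
      \<subseteq> (\<lambda>S. Nval S n) ` Pow {\<alpha>. length \<alpha> = n \<and> set \<alpha> \<subseteq> \<A>}"
    using spanning_imp_subset by blast
  then show ?thesis
    using finite_words finite_subset by blast
qed

lemma walks_extend:
  assumes "walk \<A> D p" "p \<noteq> []" "length p \<le> n"
  shows "\<exists>\<beta>\<in>walks n. take (length p) \<beta> = p"
proof -
  obtain q where "length q = n - length p" "walk \<A> D (p @ q)"
    using walk_extend[of \<A> D p "n - length p", OF successor_exists assms(1,2)] by blast
  with assms(3) show ?thesis
    by (intro bexI[of _ "p @ q"]) (simp_all add: walks_def)
qed

lemma cover_subset_Pset_walks:
  assumes "0 < n"
  shows "\<A> \<subseteq> Pset (walks n) n (replicate n undefined)"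
proof
  fix A
  assume "A \<in> \<A>"
  then obtain \<beta> where "\<beta> \<in> walks n" "take 1 \<beta> = [A]"
    using walks_extend[of "[A]" n] assms by auto
  moreover from this(2) have "A = hd \<beta>"
    by (cases \<beta>) auto
  ultimately show "A \<in> Pset (walks n) n (replicate n undefined)"
    by (auto simp: Pset_def)
qed

lemma Pset_walks_eq_Dset:
  assumes "\<alpha> \<in> walks n" "t + 1 < n"
  shows "Pset (walks n) n (take (t + 1) \<alpha>) = D (\<alpha> ! t)"
proof
  have \<alpha>: "walk \<A> D \<alpha>" "length \<alpha> = n"
    using assms(1) by (simp_all add: walks_def)
  show "Pset (walks n) n (take (t + 1) \<alpha>) \<subseteq> D (\<alpha> ! t)"
  proof
    fix B
    assume "B \<in> Pset (walks n) n (take (t + 1) \<alpha>)"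
    then obtain \<beta> where \<beta>: "\<beta> \<in> walks n" "take (t + 1) \<beta> = take (t + 1) \<alpha>" "B = \<beta> ! (t + 1)"
      using \<alpha>(2) assms(2) by (auto simp: Pset_def)
    then have "\<beta> ! t = \<alpha> ! t"
      by (metis Suc_eq_plus1 lessI nth_take)
    moreover have "\<beta> ! Suc t \<in> D (\<beta> ! t)"
      using \<beta>(1) assms(2) by (auto simp: walks_def walk_iff_nth)
    ultimately show "B \<in> D (\<alpha> ! t)"
      using \<beta>(3) by simp
  qed
  show "D (\<alpha> ! t) \<subseteq> Pset (walks n) n (take (t + 1) \<alpha>)"
  proof
    fix B
    assume "B \<in> D (\<alpha> ! t)"
    moreover have "last (take (t + 1) \<alpha>) = \<alpha> ! t"
      using \<alpha>(2) assms(2) by (simp add: take_Suc_conv_app_nth)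
    moreover have "B \<in> \<A>"
      using \<open>B \<in> D (\<alpha> ! t)\<close> Dset_subset by blast
    ultimately have "walk \<A> D (take (t + 1) \<alpha> @ [B])"
      using walk_take[OF \<alpha>(1)] by (auto simp: walk_append)
    then obtain \<beta> where "\<beta> \<in> walks n" "take (t + 2) \<beta> = take (t + 1) \<alpha> @ [B]"
      using walks_extend[of "take (t + 1) \<alpha> @ [B]" n] \<alpha>(2) assms(2) by auto
    then have "\<beta> \<in> walks n" "take (t + 1) \<beta> = take (t + 1) \<alpha>" "\<beta> ! (t + 1) = B"
      using \<alpha>(2) assms(2) by (auto simp: walks_def take_Suc_conv_app_nth)
    then show "B \<in> Pset (walks n) n (take (t + 1) \<alpha>)"
      using \<alpha>(2) assms(2) by (auto simp: Pset_def)
  qed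
qed

lemma spanning_walks:
  assumes "0 < n"
  shows "spanning F Q \<A> G n (walks n)"
  unfolding spanning_def
proof (intro conjI ballI allI impI)
  show "walks n \<subseteq> {\<alpha>. length \<alpha> = n \<and> set \<alpha> \<subseteq> \<A>}"
    by (auto simp: walks_def walk_iff_nth)
  show "Q \<subseteq> \<Union>(Pset (walks n) n (replicate n undefined))"
    using subset_Union_cover cover_subset_Pset_walks[OF assms] by blast
  fix \<alpha> t
  assume "\<alpha> \<in> walks n" "t + 1 < n"
  then have "\<alpha> ! t \<in> \<A>"
    by (auto simp: walks_def walk_iff_nth)
  then show "Fset F (\<alpha> ! t) (G (\<alpha> ! t)) \<subseteq> \<Union>(Pset (walks n) n (take (t + 1) \<alpha>))"
    using image_subset_Union_Dset Pset_walks_eq_Dset[OF \<open>\<alpha> \<in> walks n\<close> \<open>t + 1 < n\<close>]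
    by simp
qed

lemma Nval_walks_le:
  assumes "0 < n"
  obtains \<alpha> where "\<alpha> \<in> walks n" "Nval (walks n) n \<le> card \<A> * (\<Prod>t<n. card (D (\<alpha> ! t)))"
proof -
  let ?N = "\<lambda>\<alpha>. \<Prod>t<n. card (Pset (walks n) n (take (t + 1) \<alpha>))"
  obtain A where "A \<in> \<A>"
    using cover_nonempty by blast
  then have "walks n \<noteq> {}"
    using walks_extend[of "[A]" n] assms by auto
  moreover have "finite (walks n)"
    using finite_words finite_subset spanning_imp_subset[OF spanning_walks[OF assms]] by blast
  ultimately have "Nval (walks n) n \<in> ?N ` walks n"
    unfolding Nval_def Setcompr_eq_image by (intro Max_in) auto
  then obtain \<alpha> where \<alpha>: "\<alpha> \<in> walks n" "Nval (walks n) n = ?N \<alpha>"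
    by blast
  obtain m where n: "n = Suc m"
    using assms by (cases n) auto
  have "length \<alpha> = n" "set \<alpha> \<subseteq> \<A>"
    using \<alpha>(1) by (auto simp: walks_def walk_iff_nth)
  then have "\<alpha> ! m \<in> \<A>"
    using n by auto
  have "card (Pset (walks n) n (take (m + 1) \<alpha>)) \<le> card \<A>"
    using Pset_subset[OF spanning_imp_subset[OF spanning_walks[OF assms]] assms] \<open>length \<alpha> = n\<close>
      finite_cover n by (simp add: card_mono)
  then have "?N \<alpha> \<le> (\<Prod>t<m. card (D (\<alpha> ! t))) * card \<A>"
    using Pset_walks_eq_Dset[OF \<alpha>(1)] n by (simp add: mult_le_mono1)
  also have "\<dots> \<le> card \<A> * (\<Prod>t<n. card (D (\<alpha> ! t)))"
    using card_Dset_pos[OF \<open>\<alpha> ! m \<in> \<A>\<close>] n by simp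
  finally show ?thesis
    using that \<alpha> by simp
qed

lemma card_Dset_nth_pos:
  assumes "set \<alpha> \<subseteq> \<A>" "t < length \<alpha>"
  shows "0 < card (D (\<alpha> ! t))"
  using assms nth_mem[OF assms(2)] card_Dset_pos by blast

lemma log_prod_card_Dset:
  assumes "set \<alpha> \<subseteq> \<A>" "length \<alpha> = n"
  shows "log 2 (real (\<Prod>t<n. card (D (\<alpha> ! t)))) = sum_list (map w \<alpha>)"
proof -
  have nonzero: "real (card (D (\<alpha> ! t))) \<noteq> 0" if "t \<in> {..<n}" for t
    using card_Dset_nth_pos[OF assms(1)] assms(2) that by simp
  have "log 2 (real (\<Prod>t<n. card (D (\<alpha> ! t)))) = ln (\<Prod>t<n. real (card (D (\<alpha> ! t)))) / ln 2"
    by (simp add: log_def)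
  also have "\<dots> = (\<Sum>t<n. w (\<alpha> ! t))"
    using ln_prod[of "{..<n}" "\<lambda>t. real (card (D (\<alpha> ! t)))"] nonzero
    by (simp add: sum_divide_distrib weight_def log_def)
  also have "\<dots> = sum_list (map w \<alpha>)"
    using assms(2) by (simp add: sum_list_sum_nth lessThan_atLeast0)
  finally show ?thesis .
qed

lemma prod_card_Dset_pos:
  assumes "set \<alpha> \<subseteq> \<A>" "length \<alpha> = n"
  shows "0 < (\<Prod>t<n. card (D (\<alpha> ! t)))"
  using card_Dset_nth_pos[OF assms(1)] assms(2) by (simp add: prod_pos)

lemma prod_card_Dset_le_r_inv:
  assumes "walk \<A> D \<alpha>" "length \<alpha> = n" "0 < n"
  shows "(\<Prod>t<n. card (D (\<alpha> ! t))) \<le> r_inv F Q \<A> G n"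
proof -
  have "r_inv F Q \<A> G n \<in> {Nval S n | S. spanning F Q \<A> G n S}"
    unfolding r_inv_def using spanning_walks[OF assms(3)] finite_spanning_Nvals
    by (intro Min_in) auto
  then obtain S where "spanning F Q \<A> G n S" "r_inv F Q \<A> G n = Nval S n"
    by blast
  then show ?thesis
    using prod_card_Dset_le_Nval[OF _ assms] by simp
qed

lemma sum_walk_le_log_r_inv:
  assumes "walk \<A> D \<alpha>" "length \<alpha> = n" "0 < n"
  shows "sum_list (map w \<alpha>) \<le> log 2 (real (r_inv F Q \<A> G n))"
proof -
  have "set \<alpha> \<subseteq> \<A>"
    using assms(1) by (simp add: walk_iff_nth)
  then have "sum_list (map w \<alpha>) = log 2 (real (\<Prod>t<n. card (D (\<alpha> ! t))))"
    using assms(2) by (rule log_prod_card_Dset[symmetric])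
  also have "\<dots> \<le> log 2 (real (r_inv F Q \<A> G n))"
    using prod_card_Dset_pos[OF \<open>set \<alpha> \<subseteq> \<A>\<close> assms(2)] prod_card_Dset_le_r_inv[OF assms]
    by (intro log_mono) (simp_all del: of_nat_prod)
  finally show ?thesis .
qed

lemma log_r_inv_le_sum_walk:
  assumes "0 < n"
  obtains \<alpha> where "walk \<A> D \<alpha>" "length \<alpha> = n"
    "log 2 (real (r_inv F Q \<A> G n)) \<le> log 2 (real (card \<A>)) + sum_list (map w \<alpha>)"
proof -
  obtain \<alpha> where "\<alpha> \<in> walks n"
    and Nval_le: "Nval (walks n) n \<le> card \<A> * (\<Prod>t<n. card (D (\<alpha> ! t)))"
    using Nval_walks_le[OF assms] by blast
  then have \<alpha>: "walk \<A> D \<alpha>" "length \<alpha> = n" "set \<alpha> \<subseteq> \<A>"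
    by (auto simp: walks_def walk_iff_nth)
  let ?P = "\<Prod>t<n. card (D (\<alpha> ! t))"
  have "0 < ?P"
    by (rule prod_card_Dset_pos[OF \<alpha>(3,2)])
  have "0 < card \<A>"
    using finite_cover cover_nonempty by (simp add: card_gt_0_iff)
  have "r_inv F Q \<A> G n \<le> Nval (walks n) n"
    unfolding r_inv_def using spanning_walks[OF assms] by (intro Min_le finite_spanning_Nvals) auto
  with Nval_le have "real (r_inv F Q \<A> G n) \<le> real (card \<A> * ?P)"
    by linarith
  moreover have "0 < r_inv F Q \<A> G n"
    using \<open>0 < ?P\<close> prod_card_Dset_le_r_inv[OF \<alpha>(1,2) assms] by linarith
  ultimately have "log 2 (real (r_inv F Q \<A> G n)) \<le> log 2 (real (card \<A> * ?P))"
    by (intro log_mono) auto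
  also have "\<dots> = log 2 (real (card \<A>)) + sum_list (map w \<alpha>)"
    using \<open>0 < card \<A>\<close> \<open>0 < ?P\<close> \<alpha>
    by (simp add: log_mult_pos log_prod_card_Dset del: of_nat_prod)
  finally show ?thesis
    using that \<alpha> by blast
qed

theorem LIMSEQ_log_r_inv_div:
  "(\<lambda>n. log 2 (real (r_inv F Q \<A> G n)) / real n) \<longlonglongrightarrow> max_cycle_mean \<A> D w"
proof -
  let ?M = "max_cycle_mean \<A> D w"
  let ?W = "log 2 (real (card \<A>))"
  obtain a where long_walks:
    "\<And>n. \<exists>xs. walk \<A> D xs \<and> length xs = n \<and> real n * ?M - a \<le> sum_list (map w xs)"
    using long_walks_weight_ge[of \<A> D w, OF finite_cover cover_nonempty successor_exists
        weight_nonneg] by blast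
  have lower: "real n * ?M - a \<le> log 2 (real (r_inv F Q \<A> G n))" if "0 < n" for n
    using long_walks[of n] sum_walk_le_log_r_inv \<open>0 < n\<close> by (meson order_trans)
  have upper: "log 2 (real (r_inv F Q \<A> G n)) \<le> real n * ?M + (?W + real (card \<A>) * ?W)"
    if "0 < n" for n
  proof -
    obtain \<alpha> where \<alpha>: "walk \<A> D \<alpha>" "length \<alpha> = n"
      and r_inv_le: "log 2 (real (r_inv F Q \<A> G n)) \<le> ?W + sum_list (map w \<alpha>)"
      using log_r_inv_le_sum_walk[OF \<open>0 < n\<close>] by blast
    have "0 \<le> ?W"
      using finite_cover cover_nonempty by (simp add: card_gt_0_iff Suc_le_eq)
    moreover have "0 \<le> ?M"
      by (rule max_cycle_mean_nonneg[of \<A> D w, OF finite_cover cover_nonempty successor_exists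
            weight_nonneg])
    ultimately have "sum_list (map w \<alpha>) \<le> real n * ?M + real (card \<A>) * ?W"
      using sum_walk_le[OF finite_cover \<alpha>(1) weight_le] \<alpha>(2) by simp
    with r_inv_le show ?thesis
      by simp
  qed
  from lower upper show ?thesis
    by (rule LIMSEQ_divide_of_linear_bounds)
qed

end

theorem theorem3p2:
  fixes F :: "'x \<Rightarrow> 'u \<Rightarrow> 'x set" and Q :: "'x set"
    and \<A> :: "'x set set" and G :: "'x set \<Rightarrow> 'u"
  assumes "is_system F"
    and "Q \<noteq> {}"
    and "controlled_invariant F Q"
    and "quasi_invariant_partition F Q \<A> G"
  shows "(\<lambda>n. log 2 (real (r_inv F Q \<A> G n)) / real n) \<longlonglongrightarrow> max_mean_weight F \<A> G"
proof -
  interpret quasi_invariant_partition_system F Q \<A> G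
    using assms(1,2,4) by unfold_locales
  show ?thesis
    using LIMSEQ_log_r_inv_div by (simp only: max_mean_weight_eq)
qed

end
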